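(* Assume (A1), (A2), (A3), and that for each class $c\in[C]$ the revision protocol $\rho^c$ is imitative via comparison, excess payoff, or pairwise comparison. If $\mu\in X$ is a mixed stationary Nash equilibrium, then $\mu$ is a rest point of the master equation, i.e., $f^{c,d}_{s,u}(\mu)+f^{c,r}_{s,u}(\mu)=0$ for all $c\in[C]$, $s\in\mathcal S^c$, $u\in\mathcal U^c_D$.
   Context: Model: classes $c\in[C]$ with masses $m^c>0$, finite state sets $\mathcal S^c$, nonempty finite admissible action sets $\mathcal A^c(s)$ ($\mathcal A^c=\bigcup_s\mathcal A^c(s)$), transition kernels $\phi^c(\cdot\mid s,a)\in\mathcal P(\mathcal S^c)$, action rates $\lambda^c>0$; $p=\sum_c|\mathcal S^c|,q=\sum_c|\mathcal A^c|$. $\mathcal U^c_D$ = deterministic policies ($s\mapsto u(s)\in\mathcal A^c(s)$; $u(a\mid s)=\mathbf 1[a=u(s)]$), $n^c=|\mathcal U^c_D|$. $\phi^{c,u}_{ss'}=\phi^c(s\mid s',u(s'))$. (A2): for all $c,u\in\mathcal U^c_D$, $\phi^{c,u}$ has exactly one recurrent communicating class; $\eta^{c,u}$ is the unique stationary distribution of the continuous-time chain with generator $\lambda^c(\phi^{c,u}-I)$. $X=\prod_c\{\mu^c\in\mathbb R_{\ge0}^{\mathcal S^c\times\mathcal U^c_D}:\sum\mu^c=m^c\}$, $X_{\mathcal S\times\mathcal A}=\prod_c\{\nu\in\mathbb R_{\ge0}^{\mathcal S^c\times\mathcal A^c}:\sum\nu=m^c\}$, $X^c_{\mathcal U_D}=\{\sigma\in\mathbb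 R^{n^c}_{\ge0}:\sum\sigma=m^c\}$; $\mu^c_{\mathcal S\times\mathcal A}[s,a]=\sum_u\mu^c[s,u]u(a\mid s)$; $\mu^c[\mathcal S^c,u]=\sum_s\mu^c[s,u]$, $\mu^c[\mathcal S^c,\cdot]=(\mu^c[\mathcal S^c,u])_u$. Rewards $r^c:\mathcal S^c\times\mathcal A^c\times X_{\mathcal S\times\mathcal A}\to\mathbb R$; (A1): each $r^c(s,a,\cdot)$ extends to $\mathbb R^{pq}_{\ge0}$ with an extension continuously differentiable on $X_{\mathcal S\times\mathcal A}$. $F^c_u(\mu)=\sum_{s}\sum_{a\in\mathcal A^c(s)}\eta^{c,u}(s)u(a\mid s)r^c(s,a,\mu_{\mathcal S\times\mathcal A})$, $F^c(\mu)=(F^c_u(\mu))_u$. MSNE: $\mu\in X$ with, for all $c,u$: (i) $\mu^c[\mathcal S^c,u]>0\Rightarrow F^c_u(\mu)\ge F^c_v(\mu)\ \forall v\in\mathcal U^c_D$; (ii) $\mu^c[s,u]=\eta^{c,u}(s)\mu^c[\mathcal S^c,u]$ for all $s$. Revision protocol of class $c$: $\rho^c:\mathbb R^{n^c}\times X^c_{\mathcal U_D}\to\mathbb R^{n^c\times n^c}_{\ge0}$ with revision rate $R^c>0$; (A3): $\rho^c$ Lipschitz and $R^c\ge\sup_{\mu\in X}\sum_{v\ne u}\rho^c_{uv}(F^c(\mu),\mu^c[\mathcal S^c,\cdot])$ for all $u$. Classes: imitative: $\rho^c_{uv}(F,\sigma)=r^c_{uv}(F,\sigma)\sigma_v/m^c$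 with $r^c$ Lipschitz, nonnegative, and $F_v\ge F_u\iff r^c_{kv}-r^c_{vk}\ge r^c_{ku}-r^c_{uk}$ for all $F,\sigma,u,v,k$; imitative via comparison: imitative with additionally $\mathrm{sign}(r^c_{uv}(F,\sigma))=\mathrm{sign}(\max(0,F_v-F_u))$; excess payoff: $\rho^c_{uv}(F,\sigma)=\tau^c_v(\hat F)$ with $\hat F=F-\mathbf 1F^\top\sigma/m^c$ and $\tau^c:\mathbb R^{n^c}\to\mathbb R^{n^c}_{\ge0}$ Lipschitz with $\hat F\notin\mathbb R^{n^c}_{\le0}\Rightarrow\tau^c(\hat F)^\top\hat F>0$; pairwise comparison: $\rho^c_{uv}(F,\sigma)=\tau^c_{uv}(F)$ with $\tau^c$ Lipschitz, nonnegative and $\mathrm{sign}(\tau^c_{uv}(F))=\mathrm{sign}(\max(0,F_v-F_u))$. Master equation vector fields: $f^{c,d}_{s,u}(\mu)=\lambda^c\sum_{s'}\sum_{a'\in\mathcal A^c(s')}\phi^c(s\mid s',a')u(a'\mid s')\mu^c[s',u]-\lambda^c\mu^c[s,u]$; $f^{c,r}_{s,u}(\mu)=\sum_{u'}\mu^c[s,u']\rho^c_{u'u}(F^c(\mu),\mu^c[\mathcal S^c,\cdot])-\mu^c[s,u]\sum_{u'}\rho^c_{uu'}(F^c(\mu),\mu^c[\mathcal S^c,\cdot])$. *)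

theory Defs
  imports "HOL-Analysis.Analysis"
begin

(* Conventions:
   - classes form a finite type 'c (so [C] = UNIV);
   - all states form a finite type 's; cls s is the class of state s, S^c = {s. cls s = c};
   - all actions form a finite type 'a; A s is the admissible action set of state s;
   - phi s a s' = phi^{cls s}(s' | s, a);  lam c = lambda^c;  m c = m^c;
   - a deterministic policy of class c is an extensional function u : 's => 'a
     in PiE (S^c) A;
   - a mean field mu in X is represented as mu s u = mu^{cls s}[s,u]. *)

definition St :: "('s \<Rightarrow> 'c) \<Rightarrow> 'c \<Rightarrow> 's set" where
  "St cls c = {s. cls s = c}"

definition Aall :: "('s \<Rightarrow> 'c) \<Rightarrow> ('s \<Rightarrow> 'a set) \<Rightarrow> 'c \<Rightarrow> 'a set" where
  "Aall cls A c = (\<Union>s\<in>St cls c. A s)"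

definition UD :: "('s \<Rightarrow> 'c) \<Rightarrow> ('s \<Rightarrow> 'a set) \<Rightarrow> 'c \<Rightarrow> ('s \<Rightarrow> 'a) set" where
  "UD cls A c = PiE (St cls c) A"

definition upol :: "('s \<Rightarrow> 'a) \<Rightarrow> 'a \<Rightarrow> 's \<Rightarrow> real" where
  "upol u a s = (if a = u s then 1 else 0)"

definition model_ok ::
  "('s \<Rightarrow> 'c) \<Rightarrow> ('s \<Rightarrow> 'a set) \<Rightarrow> ('s \<Rightarrow> 'a \<Rightarrow> 's \<Rightarrow> real) \<Rightarrow> ('c \<Rightarrow> real) \<Rightarrow> ('c \<Rightarrow> real) \<Rightarrow> bool" where
  "model_ok cls A phi lam m \<longleftrightarrow>
     (\<forall>c. m c > 0 \<and> lam c > 0) \<and>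
     (\<forall>s. A s \<noteq> {} \<and> finite (A s)) \<and>
     (\<forall>s. \<forall>a\<in>Aall cls A (cls s).
        (\<forall>s'. phi s a s' \<ge> 0) \<and> (\<forall>s'. cls s' \<noteq> cls s \<longrightarrow> phi s a s' = 0) \<and>
        (\<Sum>s'\<in>St cls (cls s). phi s a s') = 1)"

definition Xset :: "('s \<Rightarrow> 'c) \<Rightarrow> ('s \<Rightarrow> 'a set) \<Rightarrow> ('c \<Rightarrow> real) \<Rightarrow> ('s \<Rightarrow> ('s \<Rightarrow> 'a) \<Rightarrow> real) set" where
  "Xset cls A m = {mu. \<forall>c. (\<forall>s\<in>St cls c. \<forall>u\<in>UD cls A c. mu s u \<ge> 0) \<and>
       (\<Sum>s\<in>St cls c. \<Sum>u\<in>UD cls A c. mu s u) = m c}"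

definition muSA :: "('s::finite \<Rightarrow> 'c) \<Rightarrow> ('s \<Rightarrow> 'a::finite set) \<Rightarrow> ('s \<Rightarrow> ('s \<Rightarrow> 'a) \<Rightarrow> real) \<Rightarrow> real ^ ('s \<times> 'a)" where
  "muSA cls A mu = (\<chi> i. \<Sum>u\<in>UD cls A (cls (fst i)). mu (fst i) u * upol u (snd i) (fst i))"

definition XSA :: "('s::finite \<Rightarrow> 'c) \<Rightarrow> ('s \<Rightarrow> 'a::finite set) \<Rightarrow> ('c \<Rightarrow> real) \<Rightarrow> (real ^ ('s \<times> 'a)) set" where
  "XSA cls A m = {nu. (\<forall>i. nu $ i \<ge> 0) \<and>
      (\<forall>s a. a \<notin> Aall cls A (cls s) \<longrightarrow> nu $ (s, a) = 0) \<and>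
      (\<forall>c. (\<Sum>s\<in>St cls c. \<Sum>a\<in>Aall cls A c. nu $ (s, a)) = m c)}"

definition orthant :: "(real ^ 'i) set" where
  "orthant = {nu. \<forall>i. nu $ i \<ge> 0}"

definition A1 :: "('s::finite \<Rightarrow> 'c) \<Rightarrow> ('s \<Rightarrow> 'a::finite set) \<Rightarrow> ('c \<Rightarrow> real) \<Rightarrow>
    ('s \<Rightarrow> 'a \<Rightarrow> real ^ ('s \<times> 'a) \<Rightarrow> real) \<Rightarrow> bool" where
  "A1 cls A m r \<longleftrightarrow> (\<forall>s. \<forall>a\<in>Aall cls A (cls s).
     \<exists>g g'. (\<forall>nu\<in>XSA cls A m. g nu = r s a nu) \<and>
       (\<forall>nu\<in>XSA cls A m. (g has_derivative blinfun_apply (g' nu)) (at nu within orthant)) \<and>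
       continuous_on (XSA cls A m) g')"

definition step :: "('s \<Rightarrow> 'c) \<Rightarrow> ('s \<Rightarrow> 'a \<Rightarrow> 's \<Rightarrow> real) \<Rightarrow> 'c \<Rightarrow> ('s \<Rightarrow> 'a) \<Rightarrow> 's \<Rightarrow> 's \<Rightarrow> bool" where
  "step cls phi c u s t \<longleftrightarrow> s \<in> St cls c \<and> t \<in> St cls c \<and> phi s (u s) t > 0"

definition comm_class :: "('s \<Rightarrow> 'c) \<Rightarrow> ('s \<Rightarrow> 'a \<Rightarrow> 's \<Rightarrow> real) \<Rightarrow> 'c \<Rightarrow> ('s \<Rightarrow> 'a) \<Rightarrow> 's set \<Rightarrow> bool" where
  "comm_class cls phi c u K \<longleftrightarrow> (\<exists>s\<in>St cls c. K = {t\<in>St cls c.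
      (step cls phi c u)\<^sup>*\<^sup>* s t \<and> (step cls phi c u)\<^sup>*\<^sup>* t s})"

text \<open>For a finite chain a communicating class is recurrent iff it is closed.\<close>
definition recurrent_class :: "('s \<Rightarrow> 'c) \<Rightarrow> ('s \<Rightarrow> 'a \<Rightarrow> 's \<Rightarrow> real) \<Rightarrow> 'c \<Rightarrow> ('s \<Rightarrow> 'a) \<Rightarrow> 's set \<Rightarrow> bool" where
  "recurrent_class cls phi c u K \<longleftrightarrow> comm_class cls phi c u K \<and>
     (\<forall>s\<in>K. \<forall>t. step cls phi c u s t \<longrightarrow> t \<in> K)"

text \<open>Generator lambda^c (phi^{c,u} - I), with phi^{c,u}_{s s'} = phi^c(s | s', u(s')).\<close>
definition gen :: "('s \<Rightarrow> 'a \<Rightarrow> 's \<Rightarrow> real) \<Rightarrow> ('c \<Rightarrow> real) \<Rightarrow> 'c \<Rightarrow> ('s \<Rightarrow> 'a) \<Rightarrow> 's \<Rightarrow> 's \<Rightarrow> real" where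
  "gen phi lam c u s s' = lam c * (phi s' (u s') s - (if s = s' then 1 else 0))"

definition stationary :: "('s \<Rightarrow> 'c) \<Rightarrow> ('s \<Rightarrow> 'a \<Rightarrow> 's \<Rightarrow> real) \<Rightarrow> ('c \<Rightarrow> real) \<Rightarrow> 'c \<Rightarrow> ('s \<Rightarrow> 'a) \<Rightarrow> ('s \<Rightarrow> real) \<Rightarrow> bool" where
  "stationary cls phi lam c u eta \<longleftrightarrow>
     (\<forall>s. eta s \<ge> 0) \<and> (\<forall>s. s \<notin> St cls c \<longrightarrow> eta s = 0) \<and>
     (\<Sum>s\<in>St cls c. eta s) = 1 \<and>
     (\<forall>s\<in>St cls c. (\<Sum>s'\<in>St cls c. gen phi lam c u s s' * eta s') = 0)"

definition A2 :: "('s \<Rightarrow> 'c) \<Rightarrow> ('s \<Rightarrow> 'a set) \<Rightarrow> ('s \<Rightarrow> 'a \<Rightarrow> 's \<Rightarrow> real) \<Rightarrow> ('c \<Rightarrow> real) \<Rightarrow> bool" where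
  "A2 cls A phi lam \<longleftrightarrow> (\<forall>c. \<forall>u\<in>UD cls A c.
     (\<exists>!K. recurrent_class cls phi c u K) \<and> (\<exists>!eta. stationary cls phi lam c u eta))"

definition eta :: "('s \<Rightarrow> 'c) \<Rightarrow> ('s \<Rightarrow> 'a \<Rightarrow> 's \<Rightarrow> real) \<Rightarrow> ('c \<Rightarrow> real) \<Rightarrow> 'c \<Rightarrow> ('s \<Rightarrow> 'a) \<Rightarrow> 's \<Rightarrow> real" where
  "eta cls phi lam c u = (THE e. stationary cls phi lam c u e)"

definition Fpay :: "('s::finite \<Rightarrow> 'c) \<Rightarrow> ('s \<Rightarrow> 'a::finite set) \<Rightarrow> ('s \<Rightarrow> 'a \<Rightarrow> 's \<Rightarrow> real) \<Rightarrow> ('c \<Rightarrow> real) \<Rightarrow>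
    ('s \<Rightarrow> 'a \<Rightarrow> real ^ ('s \<times> 'a) \<Rightarrow> real) \<Rightarrow> 'c \<Rightarrow> ('s \<Rightarrow> ('s \<Rightarrow> 'a) \<Rightarrow> real) \<Rightarrow> ('s \<Rightarrow> 'a) \<Rightarrow> real" where
  "Fpay cls A phi lam r c mu u = (\<Sum>s\<in>St cls c. \<Sum>a\<in>A s.
       eta cls phi lam c u s * upol u a s * r s a (muSA cls A mu))"

definition polmass :: "('s \<Rightarrow> 'c) \<Rightarrow> 'c \<Rightarrow> ('s \<Rightarrow> ('s \<Rightarrow> 'a) \<Rightarrow> real) \<Rightarrow> ('s \<Rightarrow> 'a) \<Rightarrow> real" where
  "polmass cls c mu u = (\<Sum>s\<in>St cls c. mu s u)"

definition XU :: "('s \<Rightarrow> 'c) \<Rightarrow> ('s \<Rightarrow> 'a set) \<Rightarrow> ('c \<Rightarrow> real) \<Rightarrow> 'c \<Rightarrow> (('s \<Rightarrow> 'a) \<Rightarrow> real) set" where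
  "XU cls A m c = {sig. (\<forall>u\<in>UD cls A c. sig u \<ge> 0) \<and> (\<Sum>u\<in>UD cls A c. sig u) = m c}"

text \<open>Revision protocols rho c F sigma u v = rho^c_{uv}(F, sigma); vectors in R^{n^c} are
  represented as functions on policies, only their values on U^c_D being relevant.
  Lipschitz continuity is w.r.t. the l1 norm (all norms on R^n are equivalent).\<close>
definition lipschitz_prot :: "('b set) \<Rightarrow> (('b \<Rightarrow> real) set) \<Rightarrow>
    (('b \<Rightarrow> real) \<Rightarrow> ('b \<Rightarrow> real) \<Rightarrow> 'b \<Rightarrow> 'b \<Rightarrow> real) \<Rightarrow> bool" where
  "lipschitz_prot U XS g \<longleftrightarrow> (\<exists>L. \<forall>F F' sig sig'. sig \<in> XS \<longrightarrow> sig' \<in> XS \<longrightarrow>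
     (\<forall>u\<in>U. \<forall>v\<in>U. \<bar>g F sig u v - g F' sig' u v\<bar> \<le>
        L * ((\<Sum>w\<in>U. \<bar>F w - F' w\<bar>) + (\<Sum>w\<in>U. \<bar>sig w - sig' w\<bar>))))"

definition imitative_via_comparison :: "'b set \<Rightarrow> (('b \<Rightarrow> real) set) \<Rightarrow> real \<Rightarrow>
    (('b \<Rightarrow> real) \<Rightarrow> ('b \<Rightarrow> real) \<Rightarrow> 'b \<Rightarrow> 'b \<Rightarrow> real) \<Rightarrow> bool" where
  "imitative_via_comparison U XS mc rho \<longleftrightarrow> (\<exists>rr. lipschitz_prot U XS rr \<and>
     (\<forall>F sig. sig \<in> XS \<longrightarrow> (\<forall>u\<in>U. \<forall>v\<in>U.
        rr F sig u v \<ge> 0 \<and> rho F sig u v = rr F sig u v * sig v / mc \<and>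
        sgn (rr F sig u v) = sgn (max 0 (F v - F u)) \<and>
        (\<forall>k\<in>U. F v \<ge> F u \<longleftrightarrow> rr F sig k v - rr F sig v k \<ge> rr F sig k u - rr F sig u k))))"

definition excess_payoff :: "'b set \<Rightarrow> (('b \<Rightarrow> real) set) \<Rightarrow> real \<Rightarrow>
    (('b \<Rightarrow> real) \<Rightarrow> ('b \<Rightarrow> real) \<Rightarrow> 'b \<Rightarrow> 'b \<Rightarrow> real) \<Rightarrow> bool" where
  "excess_payoff U XS mc rho \<longleftrightarrow> (\<exists>tau :: ('b \<Rightarrow> real) \<Rightarrow> 'b \<Rightarrow> real.
     (\<exists>L. \<forall>G G'. \<forall>v\<in>U. \<bar>tau G v - tau G' v\<bar> \<le> L * (\<Sum>w\<in>U. \<bar>G w - G' w\<bar>)) \<and>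
     (\<forall>G. \<forall>v\<in>U. tau G v \<ge> 0) \<and>
     (\<forall>G. (\<exists>w\<in>U. G w > 0) \<longrightarrow> (\<Sum>w\<in>U. tau G w * G w) > 0) \<and>
     (\<forall>F sig. sig \<in> XS \<longrightarrow> (\<forall>u\<in>U. \<forall>v\<in>U.
        rho F sig u v = tau (\<lambda>w. F w - (\<Sum>w'\<in>U. F w' * sig w') / mc) v)))"

definition pairwise_comparison :: "'b set \<Rightarrow> (('b \<Rightarrow> real) set) \<Rightarrow>
    (('b \<Rightarrow> real) \<Rightarrow> ('b \<Rightarrow> real) \<Rightarrow> 'b \<Rightarrow> 'b \<Rightarrow> real) \<Rightarrow> bool" where
  "pairwise_comparison U XS rho \<longleftrightarrow> (\<exists>tau :: ('b \<Rightarrow> real) \<Rightarrow> 'b \<Rightarrow> 'b \<Rightarrow> real.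
     (\<exists>L. \<forall>G G'. \<forall>u\<in>U. \<forall>v\<in>U. \<bar>tau G u v - tau G' u v\<bar> \<le> L * (\<Sum>w\<in>U. \<bar>G w - G' w\<bar>)) \<and>
     (\<forall>G. \<forall>u\<in>U. \<forall>v\<in>U. tau G u v \<ge> 0 \<and> sgn (tau G u v) = sgn (max 0 (G v - G u))) \<and>
     (\<forall>F sig. sig \<in> XS \<longrightarrow> (\<forall>u\<in>U. \<forall>v\<in>U. rho F sig u v = tau F u v)))"

definition A3 :: "('s::finite \<Rightarrow> 'c) \<Rightarrow> ('s \<Rightarrow> 'a::finite set) \<Rightarrow> ('s \<Rightarrow> 'a \<Rightarrow> 's \<Rightarrow> real) \<Rightarrow> ('c \<Rightarrow> real) \<Rightarrow>
    ('c \<Rightarrow> real) \<Rightarrow> ('s \<Rightarrow> 'a \<Rightarrow> real ^ ('s \<times> 'a) \<Rightarrow> real) \<Rightarrow>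
    ('c \<Rightarrow> (('s \<Rightarrow> 'a) \<Rightarrow> real) \<Rightarrow> (('s \<Rightarrow> 'a) \<Rightarrow> real) \<Rightarrow> ('s \<Rightarrow> 'a) \<Rightarrow> ('s \<Rightarrow> 'a) \<Rightarrow> real) \<Rightarrow>
    ('c \<Rightarrow> real) \<Rightarrow> bool" where
  "A3 cls A phi lam m r rho R \<longleftrightarrow> (\<forall>c.
     R c > 0 \<and>
     (\<forall>F sig. sig \<in> XU cls A m c \<longrightarrow> (\<forall>u\<in>UD cls A c. \<forall>v\<in>UD cls A c. rho c F sig u v \<ge> 0)) \<and>
     lipschitz_prot (UD cls A c) (XU cls A m c) (rho c) \<and>
     (\<forall>mu\<in>Xset cls A m. \<forall>u\<in>UD cls A c.
        (\<Sum>v\<in>UD cls A c - {u}. rho c (Fpay cls A phi lam r c mu) (polmass cls c mu) u v) \<le> R c))"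

definition MSNE :: "('s::finite \<Rightarrow> 'c) \<Rightarrow> ('s \<Rightarrow> 'a::finite set) \<Rightarrow> ('s \<Rightarrow> 'a \<Rightarrow> 's \<Rightarrow> real) \<Rightarrow> ('c \<Rightarrow> real) \<Rightarrow>
    ('c \<Rightarrow> real) \<Rightarrow> ('s \<Rightarrow> 'a \<Rightarrow> real ^ ('s \<times> 'a) \<Rightarrow> real) \<Rightarrow> ('s \<Rightarrow> ('s \<Rightarrow> 'a) \<Rightarrow> real) \<Rightarrow> bool" where
  "MSNE cls A phi lam m r mu \<longleftrightarrow> mu \<in> Xset cls A m \<and>
     (\<forall>c. \<forall>u\<in>UD cls A c.
        (polmass cls c mu u > 0 \<longrightarrow>
           (\<forall>v\<in>UD cls A c. Fpay cls A phi lam r c mu u \<ge> Fpay cls A phi lam r c mu v)) \<and>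
        (\<forall>s\<in>St cls c. mu s u = eta cls phi lam c u s * polmass cls c mu u))"

definition fd :: "('s \<Rightarrow> 'c) \<Rightarrow> ('s \<Rightarrow> 'a set) \<Rightarrow> ('s \<Rightarrow> 'a \<Rightarrow> 's \<Rightarrow> real) \<Rightarrow> ('c \<Rightarrow> real) \<Rightarrow>
    'c \<Rightarrow> 's \<Rightarrow> ('s \<Rightarrow> 'a) \<Rightarrow> ('s \<Rightarrow> ('s \<Rightarrow> 'a) \<Rightarrow> real) \<Rightarrow> real" where
  "fd cls A phi lam c s u mu =
     lam c * (\<Sum>s'\<in>St cls c. \<Sum>a'\<in>A s'. phi s' a' s * upol u a' s' * mu s' u) - lam c * mu s u"

definition fr :: "('s::finite \<Rightarrow> 'c) \<Rightarrow> ('s \<Rightarrow> 'a::finite set) \<Rightarrow> ('s \<Rightarrow> 'a \<Rightarrow> 's \<Rightarrow> real) \<Rightarrow> ('c \<Rightarrow> real) \<Rightarrow>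
    ('s \<Rightarrow> 'a \<Rightarrow> real ^ ('s \<times> 'a) \<Rightarrow> real) \<Rightarrow>
    ('c \<Rightarrow> (('s \<Rightarrow> 'a) \<Rightarrow> real) \<Rightarrow> (('s \<Rightarrow> 'a) \<Rightarrow> real) \<Rightarrow> ('s \<Rightarrow> 'a) \<Rightarrow> ('s \<Rightarrow> 'a) \<Rightarrow> real) \<Rightarrow>
    'c \<Rightarrow> 's \<Rightarrow> ('s \<Rightarrow> 'a) \<Rightarrow> ('s \<Rightarrow> ('s \<Rightarrow> 'a) \<Rightarrow> real) \<Rightarrow> real" where
  "fr cls A phi lam r rho c s u mu =
     (let F = Fpay cls A phi lam r c mu; sig = polmass cls c mu in
       (\<Sum>u'\<in>UD cls A c. mu s u' * rho c F sig u' u) - mu s u * (\<Sum>u'\<in>UD cls A c. rho c F sig u u'))"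

end

theory Submission
  imports Defs
begin

text \<open>At a mixed stationary Nash equilibrium the mass of every policy u is distributed over the
  states according to the stationary law of u, so the state dynamics f^{c,d} vanish. Moreover every
  policy carrying mass is a best reply. Comparison protocols never make an agent leave a best reply,
  so f^{c,r} vanishes. For excess payoff protocols the excess payoff vector is nonpositive and zero
  at every policy i in the support; acuteness and continuity of tau then force tau to vanish off i,
  so again nobody leaves the support.\<close>

definition supported_best_replies :: "'b set \<Rightarrow> ('b \<Rightarrow> real) \<Rightarrow> ('b \<Rightarrow> real) \<Rightarrow> bool" where
  "supported_best_replies U F sig \<longleftrightarrow> (\<forall>v\<in>U. 0 < sig v \<longrightarrow> (\<forall>w\<in>U. F w \<le> F v))"

lemma revision_flow_eq_0:
  fixes x :: "'b \<Rightarrow> real"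
  assumes U: "finite U" "u \<in> U"
    and no_switch: "\<And>u' v. u' \<in> U \<Longrightarrow> v \<in> U \<Longrightarrow> u' \<noteq> v \<Longrightarrow> x u' * rho u' v = 0"
  shows "(\<Sum>u'\<in>U. x u' * rho u' u) - x u * (\<Sum>v\<in>U. rho u v) = 0"
proof -
  have inflow: "(\<Sum>u'\<in>U. x u' * rho u' u) = x u * rho u u"
  proof -
    have "(\<Sum>u'\<in>U - {u}. x u' * rho u' u) = 0"
      using no_switch U(2) by (intro sum.neutral ballI) blast
    then show ?thesis using U by (simp add: sum.remove)
  qed
  have outflow: "(\<Sum>v\<in>U. x u * rho u v) = x u * rho u u"
  proof -
    have "(\<Sum>v\<in>U - {u}. x u * rho u v) = 0"
      using no_switch U(2) by (intro sum.neutral ballI) blast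
    then show ?thesis using U by (simp add: sum.remove)
  qed
  show ?thesis using inflow outflow by (simp add: sum_distrib_left)
qed

lemma pairwise_comparison_rate_eq_0:
  assumes "pairwise_comparison U XS rho" "sig \<in> XS" "u \<in> U" "v \<in> U" "F v \<le> F u"
  shows "rho F sig u v = 0"
proof -
  obtain tau where "\<forall>G. \<forall>u\<in>U. \<forall>v\<in>U. sgn (tau G u v) = sgn (max 0 (G v - G u))"
    and "\<forall>F sig. sig \<in> XS \<longrightarrow> (\<forall>u\<in>U. \<forall>v\<in>U. rho F sig u v = tau F u v)"
    using assms(1) unfolding pairwise_comparison_def by blast
  with assms(2-) have "rho F sig u v = tau F u v" "sgn (tau F u v) = 0"
    by auto
  then show ?thesis by (simp add: sgn_eq_0_iff)
qed

lemma imitative_via_comparison_rate_eq_0: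
  assumes "imitative_via_comparison U XS mc rho" "sig \<in> XS" "u \<in> U" "v \<in> U" "F v \<le> F u"
  shows "rho F sig u v = 0"
proof -
  obtain rr where "\<forall>F sig. sig \<in> XS \<longrightarrow> (\<forall>u\<in>U. \<forall>v\<in>U.
      rho F sig u v = rr F sig u v * sig v / mc \<and> sgn (rr F sig u v) = sgn (max 0 (F v - F u)))"
    using assms(1) unfolding imitative_via_comparison_def by blast
  with assms(2-) have "rho F sig u v = rr F sig u v * sig v / mc" "sgn (rr F sig u v) = 0"
    by auto
  then show ?thesis by (simp add: sgn_eq_0_iff)
qed

lemma weighted_sum_pos_bound:
  fixes t H :: "'b \<Rightarrow> real"
  assumes U: "finite U" "i \<in> U" "j \<in> U" "j \<noteq> i"
    and t_nonneg: "\<forall>w\<in>U. 0 \<le> t w"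
    and H_nonpos: "\<forall>w\<in>U - {i}. H w \<le> 0" and H_i: "H i = e^2" and H_j: "H j \<le> - e"
    and e: "0 < e"
    and pos: "0 < (\<Sum>w\<in>U. t w * H w)"
  shows "t j < e * t i"
proof -
  have "(\<Sum>w\<in>U. t w * H w) = t i * H i + t j * H j + (\<Sum>w\<in>U - {i} - {j}. t w * H w)"
    using U by (simp add: sum.remove)
  moreover have "(\<Sum>w\<in>U - {i} - {j}. t w * H w) \<le> 0"
    using t_nonneg H_nonpos by (intro sum_nonpos) (simp add: mult_nonneg_nonpos)
  moreover have "t j * H j \<le> t j * (- e)"
    using t_nonneg U H_j by (intro mult_left_mono) auto
  ultimately have "0 < e * (e * t i - t j)"
    using pos H_i by (simp add: power2_eq_square algebra_simps)
  then show ?thesis using e by (simp add: zero_less_mult_iff)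
qed

text \<open>Perturb G to be e^2 at i and lower by e at j: acuteness gives tau j < e tau i there,
  and letting e tend to 0 yields tau G j \<le> 0.\<close>
lemma acute_map_eq_0_off_zero:
  fixes tau :: "('b \<Rightarrow> real) \<Rightarrow> 'b \<Rightarrow> real"
  assumes U: "finite U"
    and lip: "\<forall>G G'. \<forall>v\<in>U. \<bar>tau G v - tau G' v\<bar> \<le> L * (\<Sum>w\<in>U. \<bar>G w - G' w\<bar>)"
    and nonneg: "\<forall>G. \<forall>v\<in>U. 0 \<le> tau G v"
    and acute: "\<forall>G. (\<exists>w\<in>U. 0 < G w) \<longrightarrow> 0 < (\<Sum>w\<in>U. tau G w * G w)"
    and G_nonpos: "\<forall>w\<in>U. G w \<le> 0" and i: "i \<in> U" "G i = 0" and j: "j \<in> U" "j \<noteq> i"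
  shows "tau G j = 0"
proof -
  define Ge where "Ge e = G(i := e^2, j := G j - e)" for e :: real
  have dist: "(\<Sum>w\<in>U. \<bar>Ge e w - G w\<bar>) = e^2 + \<bar>e\<bar>" for e
  proof -
    have "(\<Sum>w\<in>U. \<bar>Ge e w - G w\<bar>) = (\<Sum>w\<in>U. (if w = i then e^2 else 0) + (if w = j then \<bar>e\<bar> else 0))"
      by (rule sum.cong) (auto simp: Ge_def i j)
    then show ?thesis using U i j by (simp add: sum.distrib)
  qed
  have lim: "((\<lambda>e. tau (Ge e) w) \<longlongrightarrow> tau G w) (at_right 0)" if "w \<in> U" for w
  proof -
    have "((\<lambda>e. tau (Ge e) w - tau G w) \<longlongrightarrow> 0) (at_right 0)"
    proof (rule Lim_null_comparison)
      show "\<forall>\<^sub>F e in at_right 0. norm (tau (Ge e) w - tau G w) \<le> L * (e^2 + \<bar>e\<bar>)"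
        using lip that dist by (intro always_eventually allI) (metis real_norm_def)
      show "((\<lambda>e. L * (e^2 + \<bar>e\<bar>)) \<longlongrightarrow> 0) (at_right (0::real))"
        by (auto intro!: tendsto_eq_intros)
    qed
    then show ?thesis by (simp add: LIM_zero_iff)
  qed
  have bound: "tau (Ge e) j < e * tau (Ge e) i" if "0 < e" for e
  proof (rule weighted_sum_pos_bound[OF U i(1) j])
    show "\<forall>w\<in>U. 0 \<le> tau (Ge e) w" using nonneg by blast
    show "\<forall>w\<in>U - {i}. Ge e w \<le> 0" using G_nonpos j that by (auto simp: Ge_def)
    show "Ge e i = e^2" "Ge e j \<le> - e" using G_nonpos j by (simp_all add: Ge_def)
    with \<open>0 < e\<close> have "0 < Ge e i" by simp
    with i(1) have "\<exists>w\<in>U. 0 < Ge e w" by blast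
    then show "0 < (\<Sum>w\<in>U. tau (Ge e) w * Ge e w)" using acute by blast
  qed (fact that)
  have ev: "\<forall>\<^sub>F e in at_right 0. tau (Ge e) j \<le> e * tau (Ge e) i"
    using eventually_at_right_less[of 0] by (rule eventually_mono) (simp add: bound less_imp_le)
  have "tau G j \<le> 0 * tau G i"
    by (rule tendsto_le[OF trivial_limit_at_right_real _ lim[OF j(1)] ev]) (intro tendsto_intros lim i)
  then show ?thesis using nonneg j by (simp add: order_antisym)
qed

lemma mean_payoff_eq_supported_best_reply:
  assumes U: "finite U" and sig_nonneg: "\<forall>w\<in>U. 0 \<le> sig w" and mass: "(\<Sum>w\<in>U. sig w) = mc"
    and best: "supported_best_replies U F sig" and u: "u \<in> U" "0 < sig u"
  shows "(\<Sum>w\<in>U. F w * sig w) / mc = F u"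
proof -
  have "F w * sig w = F u * sig w" if "w \<in> U" for w
  proof (cases "0 < sig w")
    case True
    then have "F w = F u"
      using best u that unfolding supported_best_replies_def by (meson order_antisym)
    then show ?thesis by simp
  qed (use sig_nonneg that in auto)
  then have "(\<Sum>w\<in>U. F w * sig w) = F u * (\<Sum>w\<in>U. sig w)"
    unfolding sum_distrib_left by (rule sum.cong[OF refl])
  moreover have "0 < mc"
  proof -
    have "sig u \<le> (\<Sum>w\<in>U. sig w)"
      using U sig_nonneg u by (intro member_le_sum) auto
    with u mass show ?thesis by simp
  qed
  ultimately show ?thesis using mass by simp
qed

lemma excess_payoff_rate_eq_0:
  fixes U :: "'b set"
  assumes prot: "excess_payoff U XS mc rho" and U: "finite U" and sig: "sig \<in> XS"
    and simplex: "\<forall>w\<in>U. 0 \<le> sig w" "(\<Sum>w\<in>U. sig w) = mc"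
    and best: "supported_best_replies U F sig"
    and u: "u \<in> U" "0 < sig u" and v: "v \<in> U" "v \<noteq> u"
  shows "rho F sig u v = 0"
proof -
  obtain tau :: "('b \<Rightarrow> real) \<Rightarrow> 'b \<Rightarrow> real" and L where
    lip: "\<forall>G G'. \<forall>v\<in>U. \<bar>tau G v - tau G' v\<bar> \<le> L * (\<Sum>w\<in>U. \<bar>G w - G' w\<bar>)" and
    nonneg: "\<forall>G. \<forall>v\<in>U. 0 \<le> tau G v" and
    acute: "\<forall>G. (\<exists>w\<in>U. 0 < G w) \<longrightarrow> 0 < (\<Sum>w\<in>U. tau G w * G w)" and
    rho: "\<forall>F sig. sig \<in> XS \<longrightarrow> (\<forall>u\<in>U. \<forall>v\<in>U.
      rho F sig u v = tau (\<lambda>w. F w - (\<Sum>w'\<in>U. F w' * sig w') / mc) v)"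
    using prot unfolding excess_payoff_def by blast
  have "(\<Sum>w'\<in>U. F w' * sig w') / mc = F u"
    using U simplex best u by (rule mean_payoff_eq_supported_best_reply)
  then have "rho F sig u v = tau (\<lambda>w. F w - F u) v"
    using rho sig u v by simp
  also have "\<dots> = 0"
    using best u v unfolding supported_best_replies_def
    by (intro acute_map_eq_0_off_zero[OF U lip nonneg acute]) auto
  finally show ?thesis .
qed

lemma stationary_eta:
  assumes "A2 cls A phi lam" "u \<in> UD cls A c"
  shows "stationary cls phi lam c u (eta cls phi lam c u)"
proof -
  have "\<exists>!e. stationary cls phi lam c u e" using assms by (simp add: A2_def)
  then show ?thesis unfolding eta_def by (rule theI')
qed

lemma fd_eq_generator_sum:
  fixes cls :: "'s::finite \<Rightarrow> 'c"
  assumes model: "model_ok cls A phi lam m" and u: "u \<in> UD cls A c" and s: "s \<in> St cls c"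
  shows "fd cls A phi lam c s u mu = (\<Sum>s'\<in>St cls c. gen phi lam c u s s' * mu s' u)"
proof -
  have policy_action: "(\<Sum>a'\<in>A s'. phi s' a' s * upol u a' s' * mu s' u) = phi s' (u s') s * mu s' u"
    if "s' \<in> St cls c" for s'
  proof -
    have "finite (A s')" using model by (simp add: model_ok_def)
    moreover have "u s' \<in> A s'" using u that by (auto simp: UD_def PiE_def Pi_def)
    moreover have "(\<Sum>a'\<in>A s'. phi s' a' s * upol u a' s' * mu s' u) =
        (\<Sum>a'\<in>A s'. if a' = u s' then phi s' (u s') s * mu s' u else 0)"
      by (rule sum.cong) (auto simp: upol_def)
    ultimately show ?thesis by simp
  qed
  have "(\<Sum>s'\<in>St cls c. gen phi lam c u s s' * mu s' u) =
      (\<Sum>s'\<in>St cls c. lam c * (phi s' (u s') s * mu s' u) - lam c * (if s' = s then mu s u else 0))"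
    by (rule sum.cong) (auto simp: gen_def algebra_simps)
  also have "\<dots> = lam c * (\<Sum>s'\<in>St cls c. phi s' (u s') s * mu s' u) - lam c * mu s u"
    using s by (simp add: sum_subtractf sum_distrib_left[symmetric] sum.delta)
  finally show ?thesis
    using policy_action by (simp add: fd_def)
qed

lemma MSNE_fd_eq_0:
  fixes cls :: "'s::finite \<Rightarrow> 'c"
  assumes model: "model_ok cls A phi lam m" and A2: "A2 cls A phi lam"
    and ne: "MSNE cls A phi lam m r mu" and s: "s \<in> St cls c" and u: "u \<in> UD cls A c"
  shows "fd cls A phi lam c s u mu = 0"
proof -
  let ?eta = "eta cls phi lam c u"
  have mu_eq: "mu s' u = ?eta s' * polmass cls c mu u" if "s' \<in> St cls c" for s'
    using ne u that by (simp add: MSNE_def)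
  have "fd cls A phi lam c s u mu = (\<Sum>s'\<in>St cls c. gen phi lam c u s s' * mu s' u)"
    using model u s by (rule fd_eq_generator_sum)
  also have "\<dots> = polmass cls c mu u * (\<Sum>s'\<in>St cls c. gen phi lam c u s s' * ?eta s')"
    by (simp add: mu_eq sum_distrib_left mult_ac)
  also have "(\<Sum>s'\<in>St cls c. gen phi lam c u s s' * ?eta s') = 0"
    using stationary_eta[OF A2 u] s by (simp add: stationary_def)
  finally show ?thesis by simp
qed

lemma polmass_in_XU:
  fixes cls :: "'s::finite \<Rightarrow> 'c"
  assumes "mu \<in> Xset cls A m"
  shows "polmass cls c mu \<in> XU cls A m c"
  using assms unfolding Xset_def XU_def polmass_def
  by (auto intro: sum_nonneg simp: sum.swap[of _ "St cls c"])

lemma MSNE_supported_best_replies: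
  assumes "MSNE cls A phi lam m r mu"
  shows "supported_best_replies (UD cls A c) (Fpay cls A phi lam r c mu) (polmass cls c mu)"
  using assms by (simp add: MSNE_def supported_best_replies_def)

lemma MSNE_polmass_pos:
  fixes cls :: "'s::finite \<Rightarrow> 'c"
  assumes ne: "MSNE cls A phi lam m r mu" and s: "s \<in> St cls c" and u: "u \<in> UD cls A c"
    and "mu s u \<noteq> 0"
  shows "0 < polmass cls c mu u"
proof -
  have "0 \<le> polmass cls c mu u"
    using polmass_in_XU[of mu cls A m c] ne u by (simp add: MSNE_def XU_def)
  moreover have "mu s u = eta cls phi lam c u s * polmass cls c mu u"
    using ne s u by (simp add: MSNE_def)
  ultimately show ?thesis using \<open>mu s u \<noteq> 0\<close> by force
qed

lemma MSNE_rate_from_support_eq_0: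
  fixes cls :: "'s::finite \<Rightarrow> 'c" and A :: "'s \<Rightarrow> 'a::finite set"
  assumes prot: "imitative_via_comparison (UD cls A c) (XU cls A m c) (m c) rho
                  \<or> excess_payoff (UD cls A c) (XU cls A m c) (m c) rho
                  \<or> pairwise_comparison (UD cls A c) (XU cls A m c) rho"
    and ne: "MSNE cls A phi lam m r mu"
    and u: "u \<in> UD cls A c" "0 < polmass cls c mu u" and v: "v \<in> UD cls A c" "v \<noteq> u"
  shows "rho (Fpay cls A phi lam r c mu) (polmass cls c mu) u v = 0"
proof -
  have sig: "polmass cls c mu \<in> XU cls A m c"
    using ne by (simp add: MSNE_def polmass_in_XU)
  define F where "F = Fpay cls A phi lam r c mu"
  have best: "supported_best_replies (UD cls A c) F (polmass cls c mu)"
    unfolding F_def using ne by (rule MSNE_supported_best_replies)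
  then have le: "F v \<le> F u"
    using u v unfolding supported_best_replies_def by blast
  from prot have "rho F (polmass cls c mu) u v = 0"
  proof (elim disjE)
    show ?thesis if "imitative_via_comparison (UD cls A c) (XU cls A m c) (m c) rho"
      using that sig u(1) v(1) le by (rule imitative_via_comparison_rate_eq_0[where F = F])
    show ?thesis if "excess_payoff (UD cls A c) (XU cls A m c) (m c) rho"
      using excess_payoff_rate_eq_0[OF that _ sig _ _ best u v] sig by (simp add: XU_def)
    show ?thesis if "pairwise_comparison (UD cls A c) (XU cls A m c) rho"
      using that sig u(1) v(1) le by (rule pairwise_comparison_rate_eq_0[where F = F])
  qed
  then show ?thesis by (simp add: F_def)
qed

lemma MSNE_fr_eq_0:
  fixes cls :: "'s::finite \<Rightarrow> 'c" and A :: "'s \<Rightarrow> 'a::finite set"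
  assumes prot: "imitative_via_comparison (UD cls A c) (XU cls A m c) (m c) (rho c)
                  \<or> excess_payoff (UD cls A c) (XU cls A m c) (m c) (rho c)
                  \<or> pairwise_comparison (UD cls A c) (XU cls A m c) (rho c)"
    and ne: "MSNE cls A phi lam m r mu" and s: "s \<in> St cls c" and u: "u \<in> UD cls A c"
  shows "fr cls A phi lam r rho c s u mu = 0"
  unfolding fr_def Let_def
proof (rule revision_flow_eq_0[OF _ u])
  fix u' v assume u': "u' \<in> UD cls A c" and v: "v \<in> UD cls A c" "u' \<noteq> v"
  show "mu s u' * rho c (Fpay cls A phi lam r c mu) (polmass cls c mu) u' v = 0"
  proof (cases "mu s u' = 0")
    case False
    with ne s u' have "0 < polmass cls c mu u'" by (rule MSNE_polmass_pos)
    with u' v show ?thesis using MSNE_rate_from_support_eq_0[OF prot ne] by simp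
  qed simp
qed simp

theorem theorem4:
  fixes cls :: "'s::finite \<Rightarrow> 'c::finite"
    and A :: "'s \<Rightarrow> 'a::finite set"
    and phi :: "'s \<Rightarrow> 'a \<Rightarrow> 's \<Rightarrow> real"
    and lam :: "'c \<Rightarrow> real"
    and m :: "'c \<Rightarrow> real"
    and r :: "'s \<Rightarrow> 'a \<Rightarrow> real ^ ('s \<times> 'a) \<Rightarrow> real"
    and rho :: "'c \<Rightarrow> (('s \<Rightarrow> 'a) \<Rightarrow> real) \<Rightarrow> (('s \<Rightarrow> 'a) \<Rightarrow> real) \<Rightarrow> ('s \<Rightarrow> 'a) \<Rightarrow> ('s \<Rightarrow> 'a) \<Rightarrow> real"
    and R :: "'c \<Rightarrow> real"
    and mu :: "'s \<Rightarrow> ('s \<Rightarrow> 'a) \<Rightarrow> real"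
  assumes model: "model_ok cls A phi lam m"
    and A1: "A1 cls A m r"
    and A2: "A2 cls A phi lam"
    and A3: "A3 cls A phi lam m r rho R"
    and protocols: "\<forall>c. imitative_via_comparison (UD cls A c) (XU cls A m c) (m c) (rho c)
                      \<or> excess_payoff (UD cls A c) (XU cls A m c) (m c) (rho c)
                      \<or> pairwise_comparison (UD cls A c) (XU cls A m c) (rho c)"
    and ne: "MSNE cls A phi lam m r mu"
  shows "\<forall>c. \<forall>s\<in>St cls c. \<forall>u\<in>UD cls A c.
           fd cls A phi lam c s u mu + fr cls A phi lam r rho c s u mu = 0"
  using MSNE_fd_eq_0[OF model A2 ne] MSNE_fr_eq_0[OF _ ne] protocols by simp

end
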